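(* Let $\mathbb S$ be the free semigroup action on the compact metric space $X$ generated by continuous maps $g_1,\dots,g_p$. Then the set $E^f_p(X,\mathbb S)$ of full entropy points of $\mathbb S$ is nonempty.
   Context: Setting: $(X,d)$ compact metric space, $g_1,\dots,g_p:X\to X$ continuous; $G_n^*$ the set of words $\underline g=g_{i_n}\cdots g_{i_1}$, $i_j\in\{1,\dots,p\}$; $d_{\underline g}(x,y)=\max_{0\le j\le n}d(g_{i_j}\cdots g_{i_1}x,g_{i_j}\cdots g_{i_1}y)$; $s(K,\underline g,\varepsilon)$ the maximal cardinality of a $(\underline g,\varepsilon)$-separated subset of $K$; $h_{top}(K,\mathbb S)=\lim_{\varepsilon\to0}\limsup_n\frac1n\log\big(p^{-n}\sum_{\underline g\in G_n^*}s(K,\underline g,\varepsilon)\big)$. A point $x_0$ is a full entropy point if $h_{top}(K,\mathbb S)=h_{top}(X,\mathbb S)$ for every closed neighbourhood $K$ of $x_0$. *)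

theory Defs
  imports "HOL-Analysis.Analysis"
begin

text \<open>Generators are indexed by 1..p: g :: nat => 'a => 'a, with g i the i-th map.
A word g_{i_n} ... g_{i_1} in G_n^* is represented by the list [i_1, ..., i_n]
(listed in order of application), with entries in {1..p}.\<close>

definition words :: "nat \<Rightarrow> nat \<Rightarrow> nat list set" where
  "words p n = {w. length w = n \<and> set w \<subseteq> {1..p}}"

fun word_comp :: "(nat \<Rightarrow> 'a \<Rightarrow> 'a) \<Rightarrow> nat list \<Rightarrow> 'a \<Rightarrow> 'a" where
  "word_comp g [] = id"
| "word_comp g (i # w) = word_comp g w \<circ> g i"

definition word_dist :: "(nat \<Rightarrow> 'a::metric_space \<Rightarrow> 'a) \<Rightarrow> nat list \<Rightarrow> 'a \<Rightarrow> 'a \<Rightarrow> real" where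
  "word_dist g w x y =
     Max ((\<lambda>j. dist (word_comp g (take j w) x) (word_comp g (take j w) y)) ` {0..length w})"

definition separated :: "(nat \<Rightarrow> 'a::metric_space \<Rightarrow> 'a) \<Rightarrow> nat list \<Rightarrow> real \<Rightarrow> 'a set \<Rightarrow> bool" where
  "separated g w \<epsilon> S \<longleftrightarrow> (\<forall>x\<in>S. \<forall>y\<in>S. x \<noteq> y \<longrightarrow> word_dist g w x y > \<epsilon>)"

definition max_sep :: "(nat \<Rightarrow> 'a::metric_space \<Rightarrow> 'a) \<Rightarrow> 'a set \<Rightarrow> nat list \<Rightarrow> real \<Rightarrow> nat" where
  "max_sep g K w \<epsilon> = Sup {card S | S. S \<subseteq> K \<and> finite S \<and> separated g w \<epsilon> S}"

definition htop :: "nat \<Rightarrow> (nat \<Rightarrow> 'a::metric_space \<Rightarrow> 'a) \<Rightarrow> 'a set \<Rightarrow> ereal" where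
  "htop p g K = Lim (at_right 0) (\<lambda>\<epsilon>::real.
      limsup (\<lambda>n::nat. ereal (ln ((1 / real p ^ n) * (\<Sum>w\<in>words p n. real (max_sep g K w \<epsilon>))) / real n)))"

definition full_entropy_point :: "nat \<Rightarrow> (nat \<Rightarrow> 'a::metric_space \<Rightarrow> 'a) \<Rightarrow> 'a \<Rightarrow> bool" where
  "full_entropy_point p g x0 \<longleftrightarrow>
     (\<forall>K. closed K \<and> x0 \<in> interior K \<longrightarrow> htop p g K = htop p g UNIV)"

end

theory Submission
  imports Defs
begin

text \<open>The topological entropy of a set is monotone and max-subadditive,
  \<open>h(A \<union> B) \<le> max (h A) (h B)\<close>: a separated subset of \<open>A \<union> B\<close> splits into separated
  subsets of \<open>A\<close> and \<open>B\<close>, and the exponential growth rate of a sum of two sequences is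
  the larger of their growth rates. If no point had full entropy, every point would have a
  closed neighbourhood of entropy strictly below \<open>h(X)\<close>; finitely many of their interiors
  cover the compact space \<open>X\<close>, so by max-subadditivity one of these neighbourhoods has
  entropy at least \<open>h(X)\<close>, a contradiction.\<close>

lemma continuous_on_word_comp:
  assumes "\<And>i. i \<in> set w \<Longrightarrow> continuous_on UNIV (g i)"
  shows "continuous_on UNIV (word_comp g w)"
  using assms
proof (induction w)
  case Nil
  then show ?case by (simp add: continuous_on_id)
next
  case (Cons i w)
  then show ?case by (auto intro: continuous_on_compose2)
qed

lemma word_dist_uniformly_small:
  fixes g :: "nat \<Rightarrow> 'a::metric_space \<Rightarrow> 'a"
  assumes cpt: "compact (UNIV :: 'a set)"
    and cont: "\<And>i. i \<in> set w \<Longrightarrow> continuous_on UNIV (g i)"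
    and e: "e > 0"
  obtains \<delta> where "\<delta> > 0" "\<And>x y. dist x y < \<delta> \<Longrightarrow> word_dist g w x y < e"
proof -
  have "uniformly_continuous_on UNIV (word_comp g (take j w))" for j
    using cont by (intro compact_uniformly_continuous[OF continuous_on_word_comp cpt])
      (meson in_set_takeD)
  then have "\<forall>j. \<exists>d>0. \<forall>x y. dist x y < d \<longrightarrow>
      dist (word_comp g (take j w) x) (word_comp g (take j w) y) < e"
    using e unfolding uniformly_continuous_on_def by blast
  then obtain d where d: "\<And>j. d j > 0" and small: "\<And>j x y. dist x y < d j \<Longrightarrow>
      dist (word_comp g (take j w) x) (word_comp g (take j w) y) < e"
    by metis
  define \<delta> where "\<delta> = Min (d ` {0..length w})"
  show thesis
  proof
    show "\<delta> > 0" unfolding \<delta>_def using d by simp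
    show "word_dist g w x y < e" if xy: "dist x y < \<delta>" for x y
    proof -
      have "dist x y < d j" if "j \<le> length w" for j
        using xy Min_le[of "d ` {0..length w}" "d j"] that unfolding \<delta>_def by auto
      then show ?thesis unfolding word_dist_def by (subst Max_less_iff) (auto intro: small)
    qed
  qed
qed

text \<open>This bound makes the supremum in \<^const>\<open>max_sep\<close> a genuine maximum rather than the junk
  value of \<^const>\<open>Sup\<close> on an unbounded set of naturals.\<close>

lemma card_separated_bounded:
  fixes g :: "nat \<Rightarrow> 'a::metric_space \<Rightarrow> 'a"
  assumes cpt: "compact (UNIV :: 'a set)"
    and cont: "\<And>i. i \<in> set w \<Longrightarrow> continuous_on UNIV (g i)"
    and e: "e > 0"
  obtains N where "\<And>S. finite S \<Longrightarrow> separated g w e S \<Longrightarrow> card S \<le> N"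
proof -
  obtain \<delta> where \<delta>: "\<delta> > 0" and small: "\<And>x y. dist x y < \<delta> \<Longrightarrow> word_dist g w x y < e"
    using word_dist_uniformly_small[where g=g and w=w, OF cpt cont e] by blast
  obtain C :: "'a set" where C: "finite C" "UNIV \<subseteq> (\<Union>c\<in>C. ball c (\<delta>/2))"
    by (rule compactE_image[OF cpt, of UNIV "\<lambda>c. ball c (\<delta>/2)"]) (use \<delta> in auto)
  then have "\<forall>s. \<exists>c\<in>C. s \<in> ball c (\<delta>/2)" by blast
  then obtain f where f: "\<And>s. f s \<in> C" "\<And>s. dist (f s) s < \<delta>/2" by (metis mem_ball)
  have "card S \<le> card C" if S: "separated g w e S" for S
  proof -
    have "inj_on f S"
    proof (rule inj_onI, rule ccontr)
      fix x y assume xy: "x \<in> S" "y \<in> S" "f x = f y" "x \<noteq> y"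
      have "dist x y < \<delta>"
        using dist_triangle2[of x y "f x"] f(2)[of x] f(2)[of y] xy(3)
        by (simp add: dist_commute)
      then have "word_dist g w x y < e" by (rule small)
      with S xy show False unfolding separated_def by fastforce
    qed
    then show ?thesis using card_inj_on_le[of f S C] f(1) C(1) by auto
  qed
  then show thesis using that[of "card C"] by blast
qed

lemma separated_subset: "separated g w e S \<Longrightarrow> T \<subseteq> S \<Longrightarrow> separated g w e T"
  unfolding separated_def by blast

lemma separated_antimono: "separated g w e S \<Longrightarrow> e' \<le> e \<Longrightarrow> separated g w e' S"
  unfolding separated_def by force

lemma max_sep_least:
  fixes g :: "nat \<Rightarrow> 'a::metric_space \<Rightarrow> 'a"
  assumes "\<And>S. S \<subseteq> K \<Longrightarrow> finite S \<Longrightarrow> separated g w e S \<Longrightarrow> card S \<le> b"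
  shows "max_sep g K w e \<le> b"
proof -
  have "card {} \<in> {card S | S. S \<subseteq> K \<and> finite S \<and> separated g w e S}"
    by (auto simp: separated_def intro!: exI[of _ "{}"])
  then show ?thesis unfolding max_sep_def using assms by (intro cSup_least) auto
qed

context
  fixes g :: "nat \<Rightarrow> 'a::metric_space \<Rightarrow> 'a" and w :: "nat list"
  assumes cpt: "compact (UNIV :: 'a set)"
    and cont: "\<And>i. i \<in> set w \<Longrightarrow> continuous_on UNIV (g i)"
begin

lemma max_sep_upper:
  assumes "e > 0" "S \<subseteq> K" "finite S" "separated g w e S"
  shows "card S \<le> max_sep g K w e"
proof -
  obtain N where "\<And>S. finite S \<Longrightarrow> separated g w e S \<Longrightarrow> card S \<le> N"
    using card_separated_bounded[where g=g and w=w, OF cpt cont \<open>e > 0\<close>] by blast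
  then have "bdd_above {card S | S. S \<subseteq> K \<and> finite S \<and> separated g w e S}"
    by (intro bdd_aboveI[of _ N]) blast
  then show ?thesis unfolding max_sep_def using assms by (intro cSup_upper) auto
qed

lemma max_sep_mono_set: "e > 0 \<Longrightarrow> K \<subseteq> L \<Longrightarrow> max_sep g K w e \<le> max_sep g L w e"
  by (meson max_sep_least max_sep_upper order_trans)

lemma max_sep_antimono_scale: "0 < e \<Longrightarrow> e \<le> e' \<Longrightarrow> max_sep g K w e' \<le> max_sep g K w e"
  by (meson max_sep_least max_sep_upper separated_antimono)

lemma max_sep_ge_1: "e > 0 \<Longrightarrow> x \<in> K \<Longrightarrow> 1 \<le> max_sep g K w e"
  using max_sep_upper[of e "{x}" K] by (simp add: separated_def)

lemma max_sep_Un: "e > 0 \<Longrightarrow> max_sep g (A \<union> B) w e \<le> max_sep g A w e + max_sep g B w e"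
proof (rule max_sep_least)
  fix S assume e: "e > 0" and S: "S \<subseteq> A \<union> B" "finite S" "separated g w e S"
  have "card S \<le> card (S \<inter> A) + card (S - A)"
    by (metis Int_Diff_Un Int_Diff_disjoint S(2) card_Un_disjoint finite_Diff finite_Int le_refl)
  also have "card (S \<inter> A) \<le> max_sep g A w e"
    using S by (intro max_sep_upper[OF e]) (auto intro: separated_subset)
  also have "card (S - A) \<le> max_sep g B w e"
    using S by (intro max_sep_upper[OF e]) (auto intro: separated_subset)
  finally show "card S \<le> max_sep g A w e + max_sep g B w e" by simp
qed

end

definition growth_rate :: "(nat \<Rightarrow> real) \<Rightarrow> ereal" where
  "growth_rate s = limsup (\<lambda>n. ereal (ln (s n) / real n))"

lemma growth_rate_mono:
  assumes "\<And>n. 0 < s n" "\<And>n. s n \<le> t n"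
  shows "growth_rate s \<le> growth_rate t"
  unfolding growth_rate_def
proof (intro Limsup_mono always_eventually allI)
  fix n
  have "ln (s n) \<le> ln (t n)" using assms[of n] by simp
  then show "ereal (ln (s n) / real n) \<le> ereal (ln (t n) / real n)"
    by (simp add: divide_right_mono)
qed

lemma limsup_max_le:
  fixes u v :: "nat \<Rightarrow> ereal"
  shows "limsup (\<lambda>n. max (u n) (v n)) \<le> max (limsup u) (limsup v)"
proof (subst Limsup_le_iff, intro allI impI)
  fix y assume y: "y > max (limsup u) (limsup v)"
  have "eventually (\<lambda>n. u n < y) sequentially" "eventually (\<lambda>n. v n < y) sequentially"
    using y Limsup_le_iff[of sequentially u "limsup u"] Limsup_le_iff[of sequentially v "limsup v"]
    by auto
  then show "eventually (\<lambda>n. max (u n) (v n) < y) sequentially"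
    by eventually_elim auto
qed

lemma ln_le_ln_2_add_max:
  fixes a b c :: real
  assumes "0 < a" "0 < b" "c \<le> a + b" "0 < c"
  shows "ln c \<le> ln 2 + max (ln a) (ln b)"
proof -
  have "ln c \<le> ln (2 * max a b)" using assms by simp
  also have "\<dots> = ln 2 + max (ln a) (ln b)" using assms by (simp add: ln_mult max_def)
  finally show ?thesis .
qed

lemma growth_rate_le_max:
  assumes pos: "\<And>n. 0 < s n" "\<And>n. 0 < t n" "\<And>n. 0 < u n"
    and le: "\<And>n. u n \<le> s n + t n"
  shows "growth_rate u \<le> max (growth_rate s) (growth_rate t)"
proof -
  let ?r = "\<lambda>s n. ereal (ln (s n) / real n)"
  have "ln (u n) / real n \<le> ln 2 / real n + max (ln (s n) / real n) (ln (t n) / real n)" for n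
    using divide_right_mono[OF ln_le_ln_2_add_max[OF pos(1,2) le pos(3)], of "real n"]
    by (simp add: add_divide_distrib max_divide_distrib_right)
  then have "?r u n \<le> ereal (ln 2 / real n) + max (?r s n) (?r t n)" for n
    by (metis ereal_less_eq(3) ereal_max plus_ereal.simps(1))
  then have "growth_rate u \<le> limsup (\<lambda>n. ereal (ln 2 / real n) + max (?r s n) (?r t n))"
    unfolding growth_rate_def by (intro Limsup_mono always_eventually allI)
  also have "\<dots> \<le> limsup (\<lambda>n. ereal (ln 2 / real n)) + limsup (\<lambda>n. max (?r s n) (?r t n))"
    by (rule ereal_limsup_add_mono)
  also have "limsup (\<lambda>n. ereal (ln 2 / real n)) = 0"
    using lim_imp_Limsup[OF trivial_limit_sequentially tendsto_ereal[OF lim_const_over_n]]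
    by (simp add: zero_ereal_def)
  also have "0 + limsup (\<lambda>n. max (?r s n) (?r t n)) \<le> max (growth_rate s) (growth_rate t)"
    unfolding growth_rate_def using limsup_max_le by simp
  finally show ?thesis .
qed

lemma tendsto_at_right_SUP_antimono:
  fixes f :: "real \<Rightarrow> ereal"
  assumes antimono: "\<And>a b. 0 < a \<Longrightarrow> a \<le> b \<Longrightarrow> f b \<le> f a"
  shows "(f \<longlongrightarrow> (SUP e\<in>{0<..}. f e)) (at_right 0)"
proof (rule order_tendstoI)
  fix a assume "a < (SUP e\<in>{0<..}. f e)"
  then obtain e0 where e0: "e0 > 0" "a < f e0" by (auto simp: less_SUP_iff)
  have "eventually (\<lambda>x. x \<in> {0<..<e0}) (at_right (0::real))"
    using e0 by (intro eventually_at_right_real)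
  then show "eventually (\<lambda>x. a < f x) (at_right 0)"
    by eventually_elim (use e0 antimono in \<open>fastforce intro: less_le_trans\<close>)
next
  fix a assume a: "(SUP e\<in>{0<..}. f e) < a"
  show "eventually (\<lambda>x. f x < a) (at_right 0)"
    using eventually_at_right_less[of "0::real"]
    by eventually_elim (use a in \<open>meson SUP_upper greaterThan_iff le_less_trans\<close>)
qed

definition sep_sum :: "nat \<Rightarrow> (nat \<Rightarrow> 'a::metric_space \<Rightarrow> 'a) \<Rightarrow> 'a set \<Rightarrow> real \<Rightarrow> nat \<Rightarrow> real" where
  "sep_sum p g K e n = (1 / real p ^ n) * (\<Sum>w\<in>words p n. real (max_sep g K w e))"

lemma htop_eq_Lim_growth_rate:
  "htop p g K = Lim (at_right 0) (\<lambda>e. growth_rate (sep_sum p g K e))"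
  unfolding htop_def growth_rate_def sep_sum_def ..

lemma finite_words: "finite (words p n)"
proof -
  have "words p n = {xs. set xs \<subseteq> {1..p} \<and> length xs = n}" unfolding words_def by auto
  then show ?thesis using finite_lists_length_eq[of "{1..p}" n] by simp
qed

locale compact_semigroup_action =
  fixes g :: "nat \<Rightarrow> 'a::metric_space \<Rightarrow> 'a" and p :: nat
  assumes cpt: "compact (UNIV :: 'a set)"
    and p_pos: "p \<ge> 1"
    and cont: "\<And>i. i \<in> {1..p} \<Longrightarrow> continuous_on UNIV (g i)"
begin

lemma continuous_on_letter: "w \<in> words p n \<Longrightarrow> i \<in> set w \<Longrightarrow> continuous_on UNIV (g i)"
  using cont unfolding words_def by auto

lemma sep_sum_pos: "K \<noteq> {} \<Longrightarrow> e > 0 \<Longrightarrow> 0 < sep_sum p g K e n"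
proof -
  assume "K \<noteq> {}" "e > 0"
  then obtain x where x: "x \<in> K" by auto
  have r: "replicate n 1 \<in> words p n" using p_pos unfolding words_def by auto
  have "1 \<le> real (max_sep g K (replicate n 1) e)"
    using max_sep_ge_1[where g=g and w="replicate n 1", OF cpt continuous_on_letter[OF r] \<open>e > 0\<close> x] by simp
  also have "\<dots> \<le> (\<Sum>w\<in>words p n. real (max_sep g K w e))"
    by (rule member_le_sum[OF r _ finite_words]) simp
  finally show ?thesis unfolding sep_sum_def using p_pos by simp
qed

lemma sep_sum_mono_set: "K \<subseteq> L \<Longrightarrow> e > 0 \<Longrightarrow> sep_sum p g K e n \<le> sep_sum p g L e n"
  unfolding sep_sum_def
  by (intro mult_left_mono sum_mono)
    (auto intro: max_sep_mono_set[where g=g, OF cpt continuous_on_letter])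

lemma sep_sum_antimono_scale: "0 < e \<Longrightarrow> e \<le> e' \<Longrightarrow> sep_sum p g K e' n \<le> sep_sum p g K e n"
  unfolding sep_sum_def
  by (intro mult_left_mono sum_mono)
    (auto intro: max_sep_antimono_scale[where g=g, OF cpt continuous_on_letter])

lemma sep_sum_Un: "e > 0 \<Longrightarrow> sep_sum p g (A \<union> B) e n \<le> sep_sum p g A e n + sep_sum p g B e n"
  unfolding sep_sum_def distrib_left[symmetric] sum.distrib[symmetric]
  by (intro mult_left_mono sum_mono)
    (auto simp flip: of_nat_add intro: max_sep_Un[where g=g, OF cpt continuous_on_letter])

lemma htop_eq_SUP: "K \<noteq> {} \<Longrightarrow> htop p g K = (SUP e\<in>{0<..}. growth_rate (sep_sum p g K e))"
  unfolding htop_eq_Lim_growth_rate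
  by (intro tendsto_Lim[OF trivial_limit_at_right_real] tendsto_at_right_SUP_antimono
      growth_rate_mono sep_sum_pos sep_sum_antimono_scale) auto

lemma htop_mono:
  assumes K: "K \<noteq> {}" and KL: "K \<subseteq> L"
  shows "htop p g K \<le> htop p g L"
proof -
  have L: "L \<noteq> {}" using K KL by auto
  have "growth_rate (sep_sum p g K e) \<le> growth_rate (sep_sum p g L e)" if "e > 0" for e
    using K KL that by (intro growth_rate_mono sep_sum_pos sep_sum_mono_set)
  then show ?thesis unfolding htop_eq_SUP[OF K] htop_eq_SUP[OF L] by (intro SUP_mono) auto
qed

lemma htop_Un_le_max:
  assumes A: "A \<noteq> {}" and B: "B \<noteq> {}"
  shows "htop p g (A \<union> B) \<le> max (htop p g A) (htop p g B)"
proof -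
  have "growth_rate (sep_sum p g (A \<union> B) e) \<le> max (htop p g A) (htop p g B)" if "e > 0" for e
  proof -
    have "growth_rate (sep_sum p g (A \<union> B) e)
        \<le> max (growth_rate (sep_sum p g A e)) (growth_rate (sep_sum p g B e))"
      using A B that by (intro growth_rate_le_max sep_sum_pos sep_sum_Un) auto
    also have "\<dots> \<le> max (htop p g A) (htop p g B)"
      unfolding htop_eq_SUP[OF A] htop_eq_SUP[OF B] using that by (intro max.mono SUP_upper) auto
    finally show ?thesis .
  qed
  moreover have "A \<union> B \<noteq> {}" using A by simp
  ultimately show ?thesis by (subst htop_eq_SUP) (auto intro: SUP_least)
qed

lemma htop_UN_le:
  assumes "finite D" "D \<noteq> {}" "\<And>x. x \<in> D \<Longrightarrow> K x \<noteq> {}"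
  shows "\<exists>x\<in>D. htop p g (\<Union>x\<in>D. K x) \<le> htop p g (K x)"
  using assms
proof (induction D rule: finite_ne_induct)
  case (singleton x)
  then show ?case by simp
next
  case (insert a D)
  then obtain x where x: "x \<in> D" "htop p g (\<Union>x\<in>D. K x) \<le> htop p g (K x)" by auto
  have "htop p g (\<Union>x\<in>insert a D. K x) \<le> max (htop p g (K a)) (htop p g (\<Union>x\<in>D. K x))"
    using insert by (simp add: htop_Un_le_max)
  also have "\<dots> \<le> max (htop p g (K a)) (htop p g (K x))"
    using x(2) by (rule max.mono[OF order_refl])
  finally show ?case using x(1) by (auto simp: le_max_iff_disj)
qed

end

theorem mainTheorem7:
  fixes g :: "nat \<Rightarrow> 'a::metric_space \<Rightarrow> 'a" and p :: nat
  assumes "compact (UNIV :: 'a set)"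
    and "p \<ge> 1"
    and "\<And>i. i \<in> {1..p} \<Longrightarrow> continuous_on UNIV (g i)"
  shows "{x0. full_entropy_point p g x0} \<noteq> {}"
proof
  assume none: "{x0. full_entropy_point p g x0} = {}"
  interpret compact_semigroup_action g p using assms by unfold_locales
  have "\<forall>x. \<exists>K. closed K \<and> x \<in> interior K \<and> htop p g K \<noteq> htop p g UNIV"
    using none unfolding full_entropy_point_def by blast
  then obtain K where K: "\<And>x. x \<in> interior (K x)" "\<And>x. htop p g (K x) \<noteq> htop p g UNIV"
    by metis
  obtain D where D: "finite D" "UNIV \<subseteq> (\<Union>x\<in>D. interior (K x))"
    by (rule compactE_image[OF assms(1), of UNIV "\<lambda>x. interior (K x)"]) (use K(1) in auto)
  have K_ne: "K x \<noteq> {}" for x using K(1)[of x] interior_subset by blast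
  have "D \<noteq> {}" using D(2) by auto
  then obtain x where "htop p g (\<Union>x\<in>D. K x) \<le> htop p g (K x)"
    using htop_UN_le[where K=K, OF D(1) _ K_ne] by blast
  moreover have "(\<Union>x\<in>D. K x) = UNIV" using D(2) interior_subset by blast
  ultimately have "htop p g UNIV \<le> htop p g (K x)" by simp
  with htop_mono[OF K_ne, of x UNIV] K(2)[of x] show False by simp
qed

end
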